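(* Let $A,p$ be real numbers with $0<A<p$. Let $\rho:(0,\infty)\to(0,\infty)$ be increasing with $x\mapsto\rho(x)/x^A$ decreasing, and let $(a_n)_{n\ge1}$ be a decreasing sequence of nonnegative numbers such that $$\sum_{n\ge1}h(a_n)\le\sum_{n\ge1}h(1/\rho(n))$$ for every increasing function $h:[0,\infty)\to[0,\infty)$ with $h(0)=0$ for which $t\mapsto h(t^p)$ is convex. Then there is a constant $C(p,A)$ depending only on $p$ and $A$ such that $a_n\le C(p,A)/\rho(n)$ for all $n\ge1$. *)

theory Defs
  imports "HOL-Analysis.Analysis"
begin

end

theory Submission
  imports Defs
begin

text \<open>Write \<open>q = 1/p\<close>, \<open>\<alpha> = A/p\<close> and \<open>Y = \<rho>(N)^-q\<close>, and test the hypothesis with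
  \<open>h(u) = max 0 (u^q - Y)\<close>, for which \<open>h(t^p) = max 0 (t - Y)\<close> is convex.
  Since \<open>a\<close> is decreasing, the left-hand sum is at least \<open>N (a_N^q - Y)\<close>.
  On the right, \<open>h(1/\<rho>(n)) = 0\<close> for \<open>n \<ge> N\<close> because \<open>\<rho>\<close> is increasing, and for
  \<open>n < N\<close> the growth condition gives \<open>\<rho>(n)^-q \<le> Y (N/n)^\<alpha>\<close>; as \<open>\<alpha> < 1\<close>,
  \<open>\<Sum>n=1..N. (N/n)^\<alpha> \<le> N/(1-\<alpha>)\<close>. Hence \<open>a_N^q \<le> (1 + 1/(1-\<alpha>)) Y\<close>, i.e.
  \<open>a_N \<le> (1 + 1/(1-\<alpha>))^p / \<rho>(N)\<close>.\<close>

lemma powr_neg_le_powr_increment: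
  fixes \<alpha> m :: real
  assumes "0 < \<alpha>" "\<alpha> < 1" "1 \<le> m"
  shows "(m + 1) powr (-\<alpha>) \<le> ((m + 1) powr (1 - \<alpha>) - m powr (1 - \<alpha>)) / (1 - \<alpha>)"
proof -
  have "\<exists>z. m < z \<and> z < m + 1 \<and>
      (m + 1) powr (1 - \<alpha>) - m powr (1 - \<alpha>) = ((m + 1) - m) * ((1 - \<alpha>) * z powr ((1 - \<alpha>) - 1))"
  proof (rule MVT2)
    fix x assume "m \<le> x" "x \<le> m + 1"
    then show "((\<lambda>z. z powr (1 - \<alpha>)) has_real_derivative (1 - \<alpha>) * x powr ((1 - \<alpha>) - 1)) (at x)"
      using assms by (intro has_real_derivative_powr) auto
  qed simp
  then obtain z where z: "m < z" "z < m + 1"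
      "(m + 1) powr (1 - \<alpha>) - m powr (1 - \<alpha>) = (1 - \<alpha>) * z powr (-\<alpha>)"
    by auto
  have "(m + 1) powr (-\<alpha>) \<le> z powr (-\<alpha>)"
    by (rule powr_mono2') (use assms z in auto)
  then show ?thesis
    using z assms by (simp add: pos_le_divide_eq mult.commute)
qed

lemma sum_powr_neg_le:
  fixes \<alpha> :: real
  assumes "0 < \<alpha>" "\<alpha> < 1"
  shows "(\<Sum>k=1..N. real k powr (-\<alpha>)) \<le> real N powr (1 - \<alpha>) / (1 - \<alpha>)"
proof (induction N)
  case 0
  then show ?case by simp
next
  case (Suc m)
  show ?case
  proof (cases "m = 0")
    case True
    then show ?thesis using assms by (simp add: field_simps)
  next
    case False
    have "(\<Sum>k=1..Suc m. real k powr (-\<alpha>)) = (\<Sum>k=1..m. real k powr (-\<alpha>)) + (real m + 1) powr (-\<alpha>)"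
      by (simp add: add.commute)
    also have "\<dots> \<le> real m powr (1 - \<alpha>) / (1 - \<alpha>)
        + ((real m + 1) powr (1 - \<alpha>) - real m powr (1 - \<alpha>)) / (1 - \<alpha>)"
      using Suc.IH powr_neg_le_powr_increment[OF assms, of "real m"] False by (intro add_mono) auto
    also have "\<dots> = real (Suc m) powr (1 - \<alpha>) / (1 - \<alpha>)"
      using assms by (simp add: diff_divide_distrib add.commute)
    finally show ?thesis .
  qed
qed

lemma sum_ratio_powr_le:
  fixes \<alpha> :: real
  assumes "0 < \<alpha>" "\<alpha> < 1"
  shows "(\<Sum>n<N. (real N / real (Suc n)) powr \<alpha>) \<le> real N / (1 - \<alpha>)"
proof -
  have "(\<Sum>n<N. (real N / real (Suc n)) powr \<alpha>) = real N powr \<alpha> * (\<Sum>k=1..N. real k powr (-\<alpha>))"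
    by (simp add: sum_distrib_left sum.atLeast1_atMost_eq powr_divide powr_minus_divide)
  also have "\<dots> \<le> real N powr \<alpha> * (real N powr (1 - \<alpha>) / (1 - \<alpha>))"
    by (intro mult_left_mono sum_powr_neg_le assms) auto
  also have "\<dots> = real N / (1 - \<alpha>)"
    using assms by (cases "N = 0") (simp_all add: powr_add[symmetric])
  finally show ?thesis .
qed

lemma convex_on_max:
  fixes f g :: "'a::real_vector \<Rightarrow> real"
  assumes "convex_on S f" "convex_on S g"
  shows "convex_on S (\<lambda>x. max (f x) (g x))"
proof (rule convex_onI)
  show "convex S" using assms(1) by (simp add: convex_on_def)
  fix t :: real and x y assume t: "0 < t" "t < 1" and xy: "x \<in> S" "y \<in> S"
  have "f ((1 - t) *\<^sub>R x + t *\<^sub>R y) \<le> (1 - t) * max (f x) (g x) + t * max (f y) (g y)"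
    using convex_onD[OF assms(1), of t x y] t xy
    by (smt (verit) max.cobounded1 mult_left_mono)
  moreover have "g ((1 - t) *\<^sub>R x + t *\<^sub>R y) \<le> (1 - t) * max (f x) (g x) + t * max (f y) (g y)"
    using convex_onD[OF assms(2), of t x y] t xy
    by (smt (verit) max.cobounded2 mult_left_mono)
  ultimately show "max (f ((1 - t) *\<^sub>R x + t *\<^sub>R y)) (g ((1 - t) *\<^sub>R x + t *\<^sub>R y))
      \<le> (1 - t) * max (f x) (g x) + t * max (f y) (g y)"
    by simp
qed

lemma admissible_root_hinge:
  fixes p Y :: real
  assumes "0 < p" "0 \<le> Y"
  defines "h \<equiv> \<lambda>u. max 0 (u powr (1 / p) - Y)"
  shows "mono_on {0..} h" "\<forall>t\<ge>0. 0 \<le> h t" "h 0 = 0" "convex_on {0..} (\<lambda>t. h (t powr p))"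
proof -
  show "mono_on {0..} h"
  proof (rule mono_onI)
    fix r s :: real assume "r \<in> {0..}" "s \<in> {0..}" "r \<le> s"
    then have "r powr (1 / p) \<le> s powr (1 / p)" using assms by (intro powr_mono2) auto
    then show "h r \<le> h s" unfolding h_def by simp
  qed
  show "\<forall>t\<ge>0. 0 \<le> h t" "h 0 = 0"
    using assms by (auto simp: h_def)
  have "convex_on {0..} (\<lambda>t::real. max 0 (t - Y))"
    by (intro convex_on_max convex_on_diff)
       (simp_all add: convex_on_const convex_on_ident concave_on_const)
  moreover have "h (t powr p) = max 0 (t - Y)" if "t \<ge> 0" for t
    using that assms by (simp add: h_def powr_powr)
  ultimately show "convex_on {0..} (\<lambda>t. h (t powr p))"
    by (simp add: convex_on_def)
qed

lemma ennreal_mult_le_suminf: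
  fixes g :: "nat \<Rightarrow> real"
  assumes "\<And>n. n < N \<Longrightarrow> c \<le> g n"
  shows "ennreal (real N * c) \<le> (\<Sum>n. ennreal (g n))"
proof -
  have "ennreal (real N * c) \<le> (\<Sum>n<N. ennreal (g n))"
  proof (cases "c \<ge> 0")
    case True
    then have "ennreal (real N * c) = (\<Sum>n<N. ennreal c)"
      by (simp add: ennreal_mult ennreal_of_nat_eq_real_of_nat)
    also have "\<dots> \<le> (\<Sum>n<N. ennreal (g n))"
      using assms by (intro sum_mono ennreal_leI) auto
    finally show ?thesis .
  qed (simp add: ennreal_neg mult_nonneg_nonpos)
  also have "\<dots> \<le> (\<Sum>n. ennreal (g n))"
    by (intro sum_le_suminf) auto
  finally show ?thesis .
qed

lemma reciprocal_le_of_antimono_ratio: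
  fixes \<rho> :: "real \<Rightarrow> real"
  assumes "antimono_on {0<..} (\<lambda>x. \<rho> x / x powr A)" "0 < x" "x \<le> y" "0 < \<rho> x" "0 < \<rho> y"
  shows "1 / \<rho> x \<le> (1 / \<rho> y) * (y / x) powr A"
proof -
  have "\<rho> y / y powr A \<le> \<rho> x / x powr A"
    using monotone_onD[OF assms(1), of x y] assms(2,3) by auto
  then show ?thesis
    using assms(2-5) by (simp add: field_simps powr_divide)
qed

lemma suminf_root_hinge_reciprocal_le:
  fixes \<rho> :: "real \<Rightarrow> real" and A p :: real and N :: nat
  assumes "0 < A" "A < p" "1 \<le> N"
    and pos: "\<And>x. 0 < x \<Longrightarrow> 0 < \<rho> x"
    and mono: "mono_on {0<..} \<rho>"
    and ratio: "antimono_on {0<..} (\<lambda>x. \<rho> x / x powr A)"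
  defines "Y \<equiv> (1 / \<rho> (real N)) powr (1 / p)"
  shows "(\<Sum>n. ennreal (max 0 ((1 / \<rho> (real (Suc n))) powr (1 / p) - Y)))
      \<le> ennreal (Y * (real N / (1 - A / p)))"
proof -
  define h where "h u = max 0 (u powr (1 / p) - Y)" for u
  have p: "0 < p" using assms by linarith
  have rN: "0 < \<rho> (real N)" using pos assms(3) by simp
  have Y0: "0 \<le> Y" by (simp add: Y_def)
  have "(\<Sum>n. ennreal (h (1 / \<rho> (real (Suc n))))) = (\<Sum>n<N. ennreal (h (1 / \<rho> (real (Suc n)))))"
  proof (rule suminf_finite)
    fix n assume "n \<notin> {..<N}"
    then have "\<rho> (real N) \<le> \<rho> (real (Suc n))"
      using assms(3) by (intro mono_onD[OF mono]) auto
    then have "(1 / \<rho> (real (Suc n))) powr (1 / p) \<le> Y"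
      unfolding Y_def using rN pos[of "real (Suc n)"] p
      by (intro powr_mono2 divide_left_mono) auto
    then show "ennreal (h (1 / \<rho> (real (Suc n)))) = 0" by (simp add: h_def)
  qed simp
  also have "\<dots> \<le> (\<Sum>n<N. ennreal (Y * (real N / real (Suc n)) powr (A / p)))"
  proof (intro sum_mono ennreal_leI)
    fix n assume "n \<in> {..<N}"
    then have "1 / \<rho> (real (Suc n)) \<le> (1 / \<rho> (real N)) * (real N / real (Suc n)) powr A"
      using rN pos by (intro reciprocal_le_of_antimono_ratio[OF ratio]) auto
    then have "(1 / \<rho> (real (Suc n))) powr (1 / p)
        \<le> ((1 / \<rho> (real N)) * (real N / real (Suc n)) powr A) powr (1 / p)"
      using pos[of "real (Suc n)"] p by (intro powr_mono2) auto
    also have "\<dots> = Y * (real N / real (Suc n)) powr (A / p)"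
      using rN by (subst powr_mult) (simp_all add: Y_def powr_powr del: of_nat_Suc)
    finally show "h (1 / \<rho> (real (Suc n))) \<le> Y * (real N / real (Suc n)) powr (A / p)"
      using Y0 by (simp add: h_def)
  qed
  also have "\<dots> = ennreal (Y * (\<Sum>n<N. (real N / real (Suc n)) powr (A / p)))"
    using rN by (simp add: Y_def sum_distrib_left)
  also have "\<dots> \<le> ennreal (Y * (real N / (1 - A / p)))"
    using sum_ratio_powr_le[of "A / p" N] assms(1,2) p rN
    by (intro ennreal_leI mult_left_mono) (auto simp: Y_def)
  finally show ?thesis by (simp add: h_def)
qed

lemma majorized_antitone_le_reciprocal:
  fixes \<rho> :: "real \<Rightarrow> real" and a :: "nat \<Rightarrow> real" and A p :: real and N :: nat
  assumes "0 < A" "A < p" "1 \<le> N"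
    and pos: "\<And>x. 0 < x \<Longrightarrow> 0 < \<rho> x"
    and mono: "mono_on {0<..} \<rho>"
    and ratio: "antimono_on {0<..} (\<lambda>x. \<rho> x / x powr A)"
    and antitone: "\<And>m n. 1 \<le> m \<Longrightarrow> m \<le> n \<Longrightarrow> a n \<le> a m"
    and nonneg: "\<And>n. 1 \<le> n \<Longrightarrow> 0 \<le> a n"
    and majorized: "\<And>h. mono_on {0..} h \<Longrightarrow> (\<forall>t\<ge>0. 0 \<le> h t) \<Longrightarrow> h 0 = 0
      \<Longrightarrow> convex_on {0..} (\<lambda>t. h (t powr p))
      \<Longrightarrow> (\<Sum>n. ennreal (h (a (Suc n)))) \<le> (\<Sum>n. ennreal (h (1 / \<rho> (real (Suc n)))))"
  shows "a N \<le> (1 + 1 / (1 - A / p)) powr p / \<rho> (real N)"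
proof -
  define K where "K = 1 + 1 / (1 - A / p)"
  define Y where "Y = (1 / \<rho> (real N)) powr (1 / p)"
  define X where "X = a N powr (1 / p)"
  have p: "0 < p" and \<alpha>: "A / p < 1" using assms(1,2) by auto
  have rN: "0 < \<rho> (real N)" using pos assms(3) by simp
  have Y0: "0 \<le> Y" by (simp add: Y_def)
  have "ennreal (real N * (X - Y)) \<le> (\<Sum>n. ennreal (max 0 (a (Suc n) powr (1 / p) - Y)))"
  proof (rule ennreal_mult_le_suminf)
    fix n assume "n < N"
    then have "X \<le> a (Suc n) powr (1 / p)"
      unfolding X_def using assms(3) p by (intro powr_mono2 antitone nonneg) auto
    then show "X - Y \<le> max 0 (a (Suc n) powr (1 / p) - Y)" by simp
  qed
  also have "\<dots> \<le> (\<Sum>n. ennreal (max 0 ((1 / \<rho> (real (Suc n))) powr (1 / p) - Y)))"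
    by (rule majorized) (use admissible_root_hinge[OF p Y0] in simp_all)
  also have "\<dots> \<le> ennreal (Y * (real N / (1 - A / p)))"
    unfolding Y_def by (rule suminf_root_hinge_reciprocal_le) (use assms in auto)
  finally have "real N * (X - Y) \<le> Y * (real N / (1 - A / p))"
    using Y0 \<alpha> by (subst (asm) ennreal_le_iff) auto
  then have "real N * (X - Y) \<le> real N * (Y / (1 - A / p))"
    by (simp add: mult.commute)
  then have "X - Y \<le> Y / (1 - A / p)"
    by (rule mult_left_le_imp_le) (use assms(3) in simp)
  then have "X \<le> K * Y"
    by (simp add: K_def algebra_simps)
  then have "X powr p \<le> (K * Y) powr p"
    using p by (intro powr_mono2) (auto simp: X_def)
  moreover have "X powr p = a N" "(K * Y) powr p = K powr p / \<rho> (real N)"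
    using p rN nonneg[OF assms(3)] \<alpha>
    by (simp_all add: X_def Y_def K_def powr_powr powr_mult powr_divide)
  ultimately show ?thesis by (simp add: K_def)
qed

theorem lemma2p2:
  fixes A p :: real
  assumes "0 < A" and "A < p"
  shows "\<exists>C::real. \<forall>(\<rho>::real \<Rightarrow> real) (a::nat \<Rightarrow> real).
    ((\<forall>x>0. \<rho> x > 0)
     \<and> mono_on {0<..} \<rho>
     \<and> antimono_on {0<..} (\<lambda>x. \<rho> x / x powr A)
     \<and> (\<forall>m n. 1 \<le> m \<longrightarrow> m \<le> n \<longrightarrow> a n \<le> a m)
     \<and> (\<forall>n\<ge>1. 0 \<le> a n)
     \<and> (\<forall>h::real \<Rightarrow> real.
          (mono_on {0..} h \<and> (\<forall>t\<ge>0. 0 \<le> h t) \<and> h 0 = 0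
           \<and> convex_on {0..} (\<lambda>t. h (t powr p)))
          \<longrightarrow> (\<Sum>n. ennreal (h (a (Suc n)))) \<le> (\<Sum>n. ennreal (h (1 / \<rho> (real (Suc n)))))))
    \<longrightarrow> (\<forall>n\<ge>1. a n \<le> C / \<rho> (real n))"
proof (intro exI[of _ "(1 + 1 / (1 - A / p)) powr p"] allI impI)
  fix \<rho> :: "real \<Rightarrow> real" and a :: "nat \<Rightarrow> real" and N :: nat
  assume hyps: "(\<forall>x>0. \<rho> x > 0)
     \<and> mono_on {0<..} \<rho>
     \<and> antimono_on {0<..} (\<lambda>x. \<rho> x / x powr A)
     \<and> (\<forall>m n. 1 \<le> m \<longrightarrow> m \<le> n \<longrightarrow> a n \<le> a m)
     \<and> (\<forall>n\<ge>1. 0 \<le> a n)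
     \<and> (\<forall>h::real \<Rightarrow> real.
          (mono_on {0..} h \<and> (\<forall>t\<ge>0. 0 \<le> h t) \<and> h 0 = 0
           \<and> convex_on {0..} (\<lambda>t. h (t powr p)))
          \<longrightarrow> (\<Sum>n. ennreal (h (a (Suc n)))) \<le> (\<Sum>n. ennreal (h (1 / \<rho> (real (Suc n))))))"
    and "1 \<le> N"
  then show "a N \<le> (1 + 1 / (1 - A / p)) powr p / \<rho> (real N)"
    by (intro majorized_antitone_le_reciprocal[OF assms]) auto
qed

end
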